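(* For $\epsilon\in\mathbb{R}$ let $$\widetilde{\Phi}_{2,\epsilon}(x,y)=\left(\frac{(\epsilon^{2}-1)x+2\epsilon y}{2\epsilon x-2\epsilon^{2}y-\epsilon^{2}-1},\ \frac{-2\epsilon x+(\epsilon^{2}-1)y}{2\epsilon x-2\epsilon^{2}y-\epsilon^{2}-1}\right).$$ Then $\widetilde{\Phi}_{2,\epsilon}$ preserves the fibration defined by the pencil of conics $C_{2,h}=\{x^2+y^2-h(1+y)^2=0\}$. A proper parametrization of each curve $C_{2,h}$ is $$P_{2,h}(t)=\left(-\frac{2(ht-\sqrt{h})}{-1+(h-1)t^{2}}+\sqrt{h},\ -\frac{2t(ht-\sqrt{h})}{-1+(h-1)t^{2}}\right),$$ with inverse $$P_{2,h}^{-1}(x,y)=\frac{\sqrt{h}\,x+(h-1)y+h}{(h-1)x+\sqrt{h}(h-1)y+\sqrt{h}(h+1)}.$$ On each curve $C_{2,h}$, $\widetilde{\Phi}_{2,\epsilon}|_{C_{2,h}}$ is conjugate via $P_{2,h}$ to the M\"obius map $$M_{2,h}(t)=\frac{(1-\epsilon\sqrt{h})t+\epsilon}{-\epsilon(h+1)t+\epsilon\sqrt{h}+1}.$$ For a fixed $\epsilon$, on each closed curve $C_{2,h}$ the map $\widetilde{\Phi}_{2,\epsilon}$ is conjugate to a rotation with constant rotation number $\rho_\epsilon=\frac{1}{2\pi}\arg\left(\frac{1-\epsilon^{2}+2i\epsilon}{1+\epsilon^{2}}\right)$.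
   Context: $\widetilde{\Phi}_{2,\epsilon}$ is the pseudo-KHK map of the vector field $\dot x=-y+x^2$, $\dot y=x(1+y)$. A parametrization $P:\mathbb{R}\to C$ of a curve $C$ by rational functions is proper if it is birational onto $C$ (its inverse is rational). Conjugate via $P_{2,h}$ means $M_{2,h}=P_{2,h}^{-1}\circ\widetilde{\Phi}_{2,\epsilon}|_{C_{2,h}}\circ P_{2,h}$. $\arg$ takes values in $[0,2\pi)$. *)

theory Defs
  imports "HOL-Complex_Analysis.Complex_Analysis"
begin

definition Phi2_den :: "real \<Rightarrow> real \<times> real \<Rightarrow> real" where
  "Phi2_den e p = (case p of (x, y) \<Rightarrow> 2*e*x - 2*e^2*y - e^2 - 1)"

definition Phi2 :: "real \<Rightarrow> real \<times> real \<Rightarrow> real \<times> real" where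
  "Phi2 e p = (case p of (x, y) \<Rightarrow>
     (((e^2 - 1)*x + 2*e*y) / Phi2_den e (x, y),
      (-2*e*x + (e^2 - 1)*y) / Phi2_den e (x, y)))"

definition C2 :: "real \<Rightarrow> (real \<times> real) set" where
  "C2 h = {(x, y). x^2 + y^2 - h*(1 + y)^2 = 0}"

definition P2_den :: "real \<Rightarrow> real \<Rightarrow> real" where
  "P2_den h t = -1 + (h - 1)*t^2"

definition P2 :: "real \<Rightarrow> real \<Rightarrow> real \<times> real" where
  "P2 h t = (- (2*(h*t - sqrt h)) / P2_den h t + sqrt h,
             - (2*t*(h*t - sqrt h)) / P2_den h t)"

definition P2inv_den :: "real \<Rightarrow> real \<times> real \<Rightarrow> real" where
  "P2inv_den h p = (case p of (x, y) \<Rightarrow> (h - 1)*x + sqrt h*(h - 1)*y + sqrt h*(h + 1))"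

definition P2inv :: "real \<Rightarrow> real \<times> real \<Rightarrow> real" where
  "P2inv h p = (case p of (x, y) \<Rightarrow> (sqrt h*x + (h - 1)*y + h) / P2inv_den h (x, y))"

definition M2 :: "real \<Rightarrow> real \<Rightarrow> real \<Rightarrow> real" where
  "M2 e h t = ((1 - e * sqrt h)*t + e) / (-e*(h + 1)*t + e * sqrt h + 1)"

text \<open>Argument with values in \<open>[0, 2\<pi>)\<close> (library \<open>Arg\<close> takes values in \<open>(-\<pi>, \<pi>]\<close>).\<close>
definition arg0 :: "complex \<Rightarrow> real" where
  "arg0 z = (if Arg z < 0 then Arg z + 2*pi else Arg z)"

definition rho2 :: "real \<Rightarrow> real" where
  "rho2 e = arg0 (Complex ((1 - e^2) / (1 + e^2)) (2*e / (1 + e^2))) / (2*pi)"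

definition cpt :: "real \<times> real \<Rightarrow> complex" where
  "cpt p = Complex (fst p) (snd p)"

end

theory Submission
  imports Defs
begin

text \<open>Identify \<open>(x, y)\<close> with \<open>z = x + i y\<close>. Then \<open>\<widetilde>\<Phi>_{2,\<epsilon>}\<close> is \<open>z \<mapsto> w z / D\<close> with
  \<open>w = 1 - \<epsilon>\<^sup>2 + 2 i \<epsilon>\<close> and the real number \<open>D = -Phi2_den \<epsilon> (x, y)\<close>, and \<open>1 + y\<close> is mapped to
  \<open>(1 + \<epsilon>\<^sup>2) (1 + y) / D\<close>. As \<open>|w| = 1 + \<epsilon>\<^sup>2\<close>, the equation \<open>|z|\<^sup>2 = h (1 + y)\<^sup>2\<close> of
  \<open>C_{2,h}\<close> is preserved. For \<open>0 < h < 1\<close> the conic is an ellipse around the origin on which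
  \<open>D > 0\<close>, so the radial projection \<open>z \<mapsto> z / |z|\<close> is a homeomorphism onto the unit circle
  conjugating the map to multiplication by \<open>w / |w| = exp (2 \<pi> i \<rho>\<^sub>\<epsilon>)\<close>; it preserves winding
  numbers because the segment from \<open>z\<close> to \<open>z / |z|\<close> avoids \<open>0\<close>. The claims about \<open>P_{2,h}\<close> and
  \<open>M_{2,h}\<close> are polynomial identities in \<open>t\<close> and \<open>s = \<surd>h\<close>, verified in homogeneous
  coordinates.\<close>

lemma finite_quadratic_zeros:
  fixes a b c :: real
  assumes "a \<noteq> 0 \<or> b \<noteq> 0 \<or> c \<noteq> 0"
  shows "finite {t. a + b * t + c * t^2 = 0}"
proof -
  have "{t. a + b * t + c * t^2 = 0} = {t. poly [:a, b, c:] t = 0}"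
    by (auto simp: algebra_simps power2_eq_square)
  moreover have "[:a, b, c:] \<noteq> 0" using assms by auto
  ultimately show ?thesis using poly_roots_finite by metis
qed

section \<open>Homogeneous coordinates\<close>

lemma mem_C2_divide_iff:
  "d \<noteq> 0 \<Longrightarrow> (a / d, b / d) \<in> C2 h \<longleftrightarrow> a^2 + b^2 - h * (d + b)^2 = 0"
  unfolding C2_def by (simp add: field_simps power2_eq_square)

lemma Phi2_den_divide:
  "d \<noteq> 0 \<Longrightarrow> Phi2_den e (a / d, b / d) = (2 * e * a - 2 * e^2 * b - (e^2 + 1) * d) / d"
  unfolding Phi2_den_def by (simp add: field_simps)

lemma Phi2_divide:
  assumes "d \<noteq> 0"
  shows "Phi2 e (a / d, b / d) =
    (((e^2 - 1) * a + 2 * e * b) / (2 * e * a - 2 * e^2 * b - (e^2 + 1) * d),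
     (-2 * e * a + (e^2 - 1) * b) / (2 * e * a - 2 * e^2 * b - (e^2 + 1) * d))"
proof -
  have "(e^2 - 1) * (a / d) + 2 * e * (b / d) = ((e^2 - 1) * a + 2 * e * b) / d"
       "-2 * e * (a / d) + (e^2 - 1) * (b / d) = (-2 * e * a + (e^2 - 1) * b) / d"
    using assms by (simp_all add: field_simps)
  then show ?thesis using assms unfolding Phi2_def prod.case Phi2_den_divide[OF assms] by simp
qed

lemma P2inv_den_divide:
  "d \<noteq> 0 \<Longrightarrow> P2inv_den h (a / d, b / d) =
     ((h - 1) * a + sqrt h * (h - 1) * b + sqrt h * (h + 1) * d) / d"
  unfolding P2inv_den_def by (simp add: field_simps)

lemma P2inv_divide:
  assumes "d \<noteq> 0"
  shows "P2inv h (a / d, b / d) =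
    (sqrt h * a + (h - 1) * b + h * d) / ((h - 1) * a + sqrt h * (h - 1) * b + sqrt h * (h + 1) * d)"
proof -
  have "sqrt h * (a / d) + (h - 1) * (b / d) + h = (sqrt h * a + (h - 1) * b + h * d) / d"
    using assms by (simp add: field_simps)
  then show ?thesis using assms unfolding P2inv_def prod.case P2inv_den_divide[OF assms] by simp
qed

section \<open>Invariance of the conics\<close>

lemma Phi2_in_C2:
  assumes "p \<in> C2 h" "Phi2_den e p \<noteq> 0"
  shows "Phi2 e p \<in> C2 h"
proof -
  obtain x y where p: "p = (x, y)" by (cases p)
  define X Y Z where "X = (e^2 - 1) * x + 2 * e * y" and "Y = - 2 * e * x + (e^2 - 1) * y"
    and "Z = Phi2_den e (x, y)"
  have "Phi2 e p = (X / Z, Y / Z)"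
    unfolding p Phi2_def X_def Y_def Z_def by simp
  \<comment> \<open>\<open>(x, y) \<mapsto> (X, Y)\<close> is \<open>1 + e\<^sup>2\<close> times a rotation, and \<open>Z + Y = - (1 + e\<^sup>2) (1 + y)\<close>\<close>
  moreover have "X^2 + Y^2 - h * (Z + Y)^2 = (1 + e^2)^2 * (x^2 + y^2 - h * (1 + y)^2)"
    unfolding X_def Y_def Z_def Phi2_den_def by (simp, algebra)
  ultimately show ?thesis
    using assms mem_C2_divide_iff[of Z X Y h] unfolding p Z_def C2_def by simp
qed

section \<open>The parametrization\<close>

text \<open>We write \<open>h = s\<^sup>2\<close> with \<open>s \<ge> 0\<close>, so that \<open>sqrt h = s\<close> and all identities are polynomial.\<close>

lemma P2_den_divide:
  "v \<noteq> 0 \<Longrightarrow> P2_den (s^2) (u / v) = ((s^2 - 1) * u^2 - v^2) / v^2"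
  unfolding P2_den_def by (simp add: field_simps)

lemma P2_divide:
  assumes "s \<ge> 0" "v \<noteq> 0" "(s^2 - 1) * u^2 - v^2 \<noteq> 0"
  shows "P2 (s^2) (u / v) =
    ((s * (s^2 - 1) * u^2 - 2 * s^2 * u * v + s * v^2) / ((s^2 - 1) * u^2 - v^2),
     (2 * s * u * v - 2 * s^2 * u^2) / ((s^2 - 1) * u^2 - v^2))"
proof -
  define Q where "Q = (s^2 - 1) * u^2 - v^2"
  have "Q \<noteq> 0" using assms(3) by (simp add: Q_def)
  then have "- (2 * (s^2 * (u / v) - s)) / (Q / v^2) + s = (s * Q - 2 * v * (s^2 * u - s * v)) / Q"
        "- (2 * (u / v) * (s^2 * (u / v) - s)) / (Q / v^2) = (2 * s * u * v - 2 * s^2 * u^2) / Q"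
    using assms(2) by (simp_all add: field_simps power2_eq_square)
  moreover have "s * Q - 2 * v * (s^2 * u - s * v) = s * (s^2 - 1) * u^2 - 2 * s^2 * u * v + s * v^2"
    unfolding Q_def by algebra
  ultimately show ?thesis
    using assms unfolding P2_def P2_den_divide[OF assms(2)] Q_def[symmetric] by simp
qed

lemma P2_eq_divide:
  assumes "s \<ge> 0" "P2_den (s^2) t \<noteq> 0"
  shows "P2 (s^2) t =
    ((s * (s^2 - 1) * t^2 - 2 * s^2 * t + s) / P2_den (s^2) t, (2 * s * t - 2 * s^2 * t^2) / P2_den (s^2) t)"
  using P2_divide[OF assms(1), of 1 t] assms(2) by (simp add: P2_den_def)

lemma P2inv_den_P2:
  assumes "s \<ge> 0" "P2_den (s^2) t \<noteq> 0"
  shows "P2inv_den (s^2) (P2 (s^2) t) = - 2 * s / P2_den (s^2) t"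
  unfolding P2_eq_divide[OF assms] P2inv_den_divide[OF assms(2)] using assms(1)
  by (simp add: P2_den_def algebra_simps power2_eq_square)

lemma P2inv_P2:
  assumes "s > 0" "P2_den (s^2) t \<noteq> 0"
  shows "P2inv (s^2) (P2 (s^2) t) = t"
proof -
  have "P2inv (s^2) (P2 (s^2) t) = (- 2 * s * t) / (- 2 * s)"
    unfolding P2_eq_divide[OF less_imp_le[OF assms(1)] assms(2)] P2inv_divide[OF assms(2)] using assms(1)
    by (simp add: P2_den_def algebra_simps power2_eq_square)
  then show ?thesis using assms(1) by simp
qed

lemma P2_in_C2:
  assumes "s \<ge> 0" "P2_den (s^2) t \<noteq> 0"
  shows "P2 (s^2) t \<in> C2 (s^2)"
  unfolding P2_eq_divide[OF assms] mem_C2_divide_iff[OF assms(2)]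
  by (simp add: P2_den_def algebra_simps power2_eq_square)

lemma finite_P2_den_zeros: "finite {t. P2_den h t = 0}"
  using finite_quadratic_zeros[of "-1" 0 "h - 1"] by (simp add: P2_den_def)

lemma finite_P2_exceptional:
  assumes "s > 0"
  shows "finite {t. P2_den (s^2) t = 0 \<or> P2inv_den (s^2) (P2 (s^2) t) = 0}"
proof -
  have "P2inv_den (s^2) (P2 (s^2) t) \<noteq> 0" if "P2_den (s^2) t \<noteq> 0" for t
    using P2inv_den_P2[OF less_imp_le[OF assms] that] assms that by simp
  then have "{t. P2_den (s^2) t = 0 \<or> P2inv_den (s^2) (P2 (s^2) t) = 0} = {t. P2_den (s^2) t = 0}"
    by blast
  then show ?thesis
    using finite_P2_den_zeros by simp
qed

lemma C2_P2inv_identities: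
  assumes "(x, y) \<in> C2 (s^2)"
  defines "N \<equiv> s * x + (s^2 - 1) * y + s^2"
    and "D \<equiv> (s^2 - 1) * x + s * (s^2 - 1) * y + s * (s^2 + 1)"
  shows "(s^2 - 1) * N^2 - D^2 = - 2 * s * D"
    and "s * (s^2 - 1) * N^2 - 2 * s^2 * N * D + s * D^2 = - 2 * s * D * x"
    and "2 * s * N * D - 2 * s^2 * N^2 = - 2 * s * D * y"
  using assms(1) unfolding C2_def N_def D_def by (simp_all, algebra+)

lemma
  assumes "s > 0" "p \<in> C2 (s^2)" "P2inv_den (s^2) p \<noteq> 0"
  shows P2_den_P2inv: "P2_den (s^2) (P2inv (s^2) p) \<noteq> 0"
    and P2_P2inv: "P2 (s^2) (P2inv (s^2) p) = p"
proof -
  obtain x y where p: "p = (x, y)" by (cases p)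
  define N where "N = s * x + (s^2 - 1) * y + s^2"
  define D where "D = (s^2 - 1) * x + s * (s^2 - 1) * y + s * (s^2 + 1)"
  have "D \<noteq> 0" and inv: "P2inv (s^2) p = N / D"
    using assms unfolding p P2inv_def P2inv_den_def N_def D_def by simp_all
  note identities = C2_P2inv_identities[OF assms(2)[unfolded p], folded N_def D_def]
  have Q: "(s^2 - 1) * N^2 - D^2 \<noteq> 0"
    unfolding identities(1) using \<open>D \<noteq> 0\<close> assms(1) by simp
  then show "P2_den (s^2) (P2inv (s^2) p) \<noteq> 0"
    unfolding inv P2_den_divide[OF \<open>D \<noteq> 0\<close>] using \<open>D \<noteq> 0\<close> by simp
  have "P2 (s^2) (N / D) = (x, y)"
    unfolding P2_divide[OF less_imp_le[OF assms(1)] \<open>D \<noteq> 0\<close> Q] identities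
    using \<open>D \<noteq> 0\<close> assms(1) by simp
  then show "P2 (s^2) (P2inv (s^2) p) = p"
    using inv p by simp
qed

text \<open>The only point of the conic outside the range of \<open>P2\<close> is its limit at \<open>t \<rightarrow> \<infinity>\<close>.\<close>

lemma P2inv_den_zero_on_C2:
  assumes "s > 0" "p \<in> C2 (s^2)" "P2inv_den (s^2) p = 0"
  shows "p = (s, - 2 * s^2 / (s^2 - 1))"
proof -
  obtain x y where p: "p = (x, y)" by (cases p)
  have D: "(s^2 - 1) * x + s * (s^2 - 1) * y + s * (s^2 + 1) = 0"
    using assms unfolding p P2inv_den_def by simp
  have "(s^2 - 1)^2 * (x^2 + y^2 - s^2 * (1 + y)^2) =
      ((s^2 - 1) * x + s * (s^2 - 1) * y + s * (s^2 + 1)) * ((s^2 - 1) * x - s * ((s^2 - 1) * y + s^2 + 1))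
      + ((s^2 - 1) * y + 2 * s^2)^2"
    by algebra
  then have y: "(s^2 - 1) * y = - 2 * s^2"
    using assms(2) D unfolding p C2_def by simp
  have "s^2 - 1 \<noteq> 0"
    using D assms(1) by (auto simp: power2_eq_square)
  have "(s^2 - 1) * x = - s * ((s^2 - 1) * y) - s * (s^2 + 1)"
    using D by algebra
  then have "(s^2 - 1) * x = (s^2 - 1) * s"
    unfolding y by algebra
  then have "x = s"
    using \<open>s^2 - 1 \<noteq> 0\<close> by simp
  moreover have "y = - 2 * s^2 / (s^2 - 1)"
    using y \<open>s^2 - 1 \<noteq> 0\<close> by (simp add: field_simps)
  ultimately show ?thesis
    unfolding p by simp
qed

lemma finite_P2inv_exceptional:
  assumes "s > 0"
  shows "finite {p \<in> C2 (s^2). P2inv_den (s^2) p = 0 \<or> P2_den (s^2) (P2inv (s^2) p) = 0}"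
proof (rule finite_subset)
  show "{p \<in> C2 (s^2). P2inv_den (s^2) p = 0 \<or> P2_den (s^2) (P2inv (s^2) p) = 0}
      \<subseteq> {(s, - 2 * s^2 / (s^2 - 1))}"
    using P2inv_den_zero_on_C2[OF assms] P2_den_P2inv[OF assms] by blast
qed simp

section \<open>Conjugacy to the M\<ouml>bius map\<close>

lemma
  fixes e s t :: real
  assumes "s > 0" "P2_den (s^2) t \<noteq> 0"
  defines "m1 \<equiv> (1 - e * s) * t + e" and "m2 \<equiv> - e * (s^2 + 1) * t + e * s + 1"
  shows Phi2_den_P2: "Phi2_den e (P2 (s^2) t) = (m2^2 + (1 - s^2) * m1^2) / P2_den (s^2) t"
    and P2inv_den_Phi2_P2: "m2^2 + (1 - s^2) * m1^2 \<noteq> 0 \<Longrightarrow>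
          P2inv_den (s^2) (Phi2 e (P2 (s^2) t)) = 2 * s * m2^2 / (m2^2 + (1 - s^2) * m1^2)"
    and P2inv_Phi2_P2: "m2^2 + (1 - s^2) * m1^2 \<noteq> 0 \<Longrightarrow>
          P2inv (s^2) (Phi2 e (P2 (s^2) t)) = m1 / m2"
proof -
  define d where "d = P2_den (s^2) t"
  define U V where "U = s * (s^2 - 1) * t^2 - 2 * s^2 * t + s" and "V = 2 * s * t - 2 * s^2 * t^2"
  define X Y Z where "X = (e^2 - 1) * U + 2 * e * V" and "Y = - 2 * e * U + (e^2 - 1) * V"
    and "Z = 2 * e * U - 2 * e^2 * V - (e^2 + 1) * d"
  have "d \<noteq> 0" using assms(2) by (simp add: d_def)
  have P2: "P2 (s^2) t = (U / d, V / d)"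
    using P2_eq_divide[OF less_imp_le[OF assms(1)] assms(2)] by (simp add: U_def V_def d_def)
  \<comment> \<open>\<open>Z\<close> is \<open>-P2_den\<close> homogenised at \<open>(m1 : m2)\<close>: in fact \<open>Phi2 e (P2 t) = P2 (m1 / m2)\<close>\<close>
  have Z: "Z = m2^2 + (1 - s^2) * m1^2"
    unfolding Z_def U_def V_def d_def P2_den_def m1_def m2_def
    by (simp add: algebra_simps power2_eq_square)
  have "Phi2_den e (P2 (s^2) t) = Z / d"
    unfolding P2 Phi2_den_divide[OF \<open>d \<noteq> 0\<close>] Z_def ..
  then show "Phi2_den e (P2 (s^2) t) = (m2^2 + (1 - s^2) * m1^2) / P2_den (s^2) t"
    unfolding Z d_def .
  assume "m2^2 + (1 - s^2) * m1^2 \<noteq> 0"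
  then have "Z \<noteq> 0" unfolding Z .
  have Phi2: "Phi2 e (P2 (s^2) t) = (X / Z, Y / Z)"
    unfolding P2 Phi2_divide[OF \<open>d \<noteq> 0\<close>] X_def Y_def Z_def ..
  have den: "(s^2 - 1) * X + s * (s^2 - 1) * Y + s * (s^2 + 1) * Z = 2 * s * m2^2"
    and num: "s * X + (s^2 - 1) * Y + s^2 * Z = 2 * s * m1 * m2"
    unfolding X_def Y_def Z_def U_def V_def d_def P2_den_def m1_def m2_def
    by (simp_all add: algebra_simps power2_eq_square)
  show "P2inv_den (s^2) (Phi2 e (P2 (s^2) t)) = 2 * s * m2^2 / (m2^2 + (1 - s^2) * m1^2)"
    unfolding Phi2 P2inv_den_divide[OF \<open>Z \<noteq> 0\<close>] Z[symmetric] using assms(1) den by simp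
  show "P2inv (s^2) (Phi2 e (P2 (s^2) t)) = m1 / m2"
    unfolding Phi2 P2inv_divide[OF \<open>Z \<noteq> 0\<close>] using assms(1) den num
    by (simp add: power2_eq_square)
qed

lemma P2inv_Phi2_P2_eq_M2:
  assumes "s > 0" "P2_den (s^2) t \<noteq> 0" "Phi2_den e (P2 (s^2) t) \<noteq> 0"
  shows "P2inv (s^2) (Phi2 e (P2 (s^2) t)) = M2 e (s^2) t"
  using assms Phi2_den_P2[OF assms(1,2)] P2inv_Phi2_P2[OF assms(1,2)] by (simp add: M2_def)

lemma finite_Phi2_den_P2_numerator_zeros:
  fixes e s :: real
  assumes "s > 0"
  shows "finite {t. (- e * (s^2 + 1) * t + e * s + 1)^2 + (1 - s^2) * ((1 - e * s) * t + e)^2 = 0}"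
proof -
  have "(- e * (s^2 + 1) * t + e * s + 1)^2 + (1 - s^2) * ((1 - e * s) * t + e)^2
      = (1 + 2 * e * s + e^2) + (- 4 * s * e * (s + e)) * t
        + (e^2 * (s^2 + 1)^2 + (1 - s^2) * (1 - e * s)^2) * t^2" for t
    by (simp add: algebra_simps power2_eq_square)
  moreover have "1 + 2 * e * s + e^2 \<noteq> 0 \<or> - 4 * s * e * (s + e) \<noteq> 0
      \<or> e^2 * (s^2 + 1)^2 + (1 - s^2) * (1 - e * s)^2 \<noteq> 0"
  proof (cases "e = - s")
    case True
    have "e^2 * (s^2 + 1)^2 + (1 - s^2) * (1 - e * s)^2 = (s^2 + 1)^2"
      unfolding True by algebra
    then show ?thesis by (simp add: add_nonneg_eq_0_iff)
  next
    case False
    then show ?thesis using assms by (cases "e = 0") auto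
  qed
  ultimately show ?thesis
    using finite_quadratic_zeros[of "1 + 2 * e * s + e^2" "- 4 * s * e * (s + e)"] by simp
qed

lemma finite_P2_Phi2_exceptional:
  assumes "s > 0"
  shows "finite {t. P2_den (s^2) t = 0 \<or> Phi2_den e (P2 (s^2) t) = 0
                  \<or> P2inv_den (s^2) (Phi2 e (P2 (s^2) t)) = 0}"
proof -
  define m1 m2 where "m1 t = (1 - e * s) * t + e" and "m2 t = - e * (s^2 + 1) * t + e * s + 1"
    for t
  have "finite {t. m2 t = 0}"
  proof -
    have "m2 t = (e * s + 1) + (- e * (s^2 + 1)) * t + 0 * t^2" for t
      by (simp add: m2_def)
    moreover have "e * s + 1 \<noteq> 0 \<or> - e * (s^2 + 1) \<noteq> 0"
      by (cases "e = 0") (simp_all add: add_nonneg_eq_0_iff)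
    ultimately show ?thesis
      using finite_quadratic_zeros[of "e * s + 1" "- e * (s^2 + 1)" 0] by simp
  qed
  moreover have "finite {t. m2 t^2 + (1 - s^2) * m1 t^2 = 0}"
    using finite_Phi2_den_P2_numerator_zeros[OF assms, of e] by (simp add: m1_def m2_def)
  moreover have "Phi2_den e (P2 (s^2) t) \<noteq> 0 \<and> P2inv_den (s^2) (Phi2 e (P2 (s^2) t)) \<noteq> 0"
    if "P2_den (s^2) t \<noteq> 0" "m2 t^2 + (1 - s^2) * m1 t^2 \<noteq> 0" "m2 t \<noteq> 0" for t
    using that assms Phi2_den_P2[OF assms that(1), of e, folded m1_def m2_def]
      P2inv_den_Phi2_P2[OF assms that(1), of e, folded m1_def m2_def]
    by simp
  then have "{t. P2_den (s^2) t = 0 \<or> Phi2_den e (P2 (s^2) t) = 0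
                  \<or> P2inv_den (s^2) (Phi2 e (P2 (s^2) t)) = 0}
      \<subseteq> {t. P2_den (s^2) t = 0} \<union> {t. m2 t^2 + (1 - s^2) * m1 t^2 = 0} \<union> {t. m2 t = 0}"
    by blast
  ultimately show ?thesis
    using finite_P2_den_zeros by (auto intro: finite_subset)
qed

section \<open>Conjugacy to a rotation\<close>

lemma Phi2_den_neg_on_C2:
  assumes "0 < h" "h < 1" "p \<in> C2 h"
  shows "Phi2_den e p < 0"
proof -
  obtain x y where p: "p = (x, y)" by (cases p)
  have conic: "x^2 + y^2 = h * (1 + y)^2"
    using assms(3) unfolding p C2_def by simp
  then have "y \<noteq> - 1"
    by (auto simp: add_nonneg_eq_0_iff)
  have "1 + 2 * y - x^2 = (1 - h) * (1 + y)^2"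
    using conic by algebra
  also have "\<dots> > 0"
    using assms(2) \<open>y \<noteq> - 1\<close> by simp
  finally have pos: "1 + 2 * y - x^2 > 0" .
  then have "1 + 2 * y > 0"
    by (smt (verit) zero_le_power2)
  have "- Phi2_den e p * (1 + 2 * y) = ((1 + 2 * y) * e - x)^2 + (1 + 2 * y - x^2)"
    unfolding p Phi2_den_def by (simp, algebra)
  also have "\<dots> > 0"
    using pos by (simp add: add_nonneg_pos)
  finally show ?thesis
    using \<open>1 + 2 * y > 0\<close> by (simp add: zero_less_mult_iff mult_less_0_iff)
qed

lemma mem_cpt_image_iff: "z \<in> cpt ` S \<longleftrightarrow> (Re z, Im z) \<in> S"
  unfolding cpt_def by (force simp: image_iff)

lemma cpt_Phi2:
  assumes "Phi2_den e p \<noteq> 0"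
  shows "cpt (Phi2 e p) = of_real (- 1 / Phi2_den e p) * (Complex (1 - e^2) (2 * e) * cpt p)"
  using assms unfolding Phi2_def cpt_def
  by (cases p) (simp add: complex_eq_iff field_simps)

lemma exp_rho2: "exp (2 * pi * \<i> * complex_of_real (rho2 e)) = sgn (Complex (1 - e^2) (2 * e))"
proof -
  define w where "w = Complex ((1 - e^2) / (1 + e^2)) (2 * e / (1 + e^2))"
  have "1 + e^2 > 0"
    by (simp add: add_pos_nonneg)
  then have w: "w = of_real (1 / (1 + e^2)) * Complex (1 - e^2) (2 * e)"
    unfolding w_def by (simp add: complex_eq_iff)
  have "Complex (1 - e^2) (2 * e) \<noteq> 0"
    by (auto simp: complex_eq_iff)
  then have "w \<noteq> 0"
    using \<open>1 + e^2 > 0\<close> unfolding w by (simp only: mult_eq_0_iff of_real_eq_0_iff) simp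
  have "exp (2 * pi * \<i> * complex_of_real (rho2 e)) = cis (arg0 w)"
    unfolding rho2_def w_def cis_conv_exp by (simp add: field_simps)
  also have "\<dots> = cis (Arg w)"
    unfolding arg0_def by (simp flip: cis_mult)
  also have "\<dots> = sgn w"
    using \<open>w \<noteq> 0\<close> by (rule cis_Arg)
  also have "\<dots> = sgn (Complex (1 - e^2) (2 * e))"
    unfolding w sgn_mult sgn_of_real using \<open>1 + e^2 > 0\<close> by simp
  finally show ?thesis .
qed

lemma sgn_cpt_Phi2:
  assumes "0 < h" "h < 1" "p \<in> C2 h"
  shows "sgn (cpt (Phi2 e p)) = exp (2 * pi * \<i> * complex_of_real (rho2 e)) * sgn (cpt p)"
  using Phi2_den_neg_on_C2[OF assms, of e] unfolding exp_rho2
  by (simp add: cpt_Phi2 sgn_mult sgn_of_real)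

lemma radial_denominator_pos:
  assumes "0 \<le> s" "s < 1" "u \<in> sphere 0 1"
  shows "1 - s * Im u > 0"
proof -
  have "Im u \<le> 1"
    using abs_Im_le_cmod[of u] assms(3) by simp
  then have "s * Im u \<le> s"
    using assms(1) mult_left_mono by fastforce
  then show ?thesis
    using assms(2) by simp
qed

lemma cpt_C2_iff:
  assumes "0 < h" "h < 1"
  shows "z \<in> cpt ` C2 h \<longleftrightarrow> cmod z = sqrt h * (1 + Im z)"
proof
  assume "z \<in> cpt ` C2 h"
  then have "(Re z)^2 + (Im z)^2 = h * (1 + Im z)^2"
    unfolding mem_cpt_image_iff C2_def by simp
  then have norm: "cmod z = sqrt h * \<bar>1 + Im z\<bar>"
    unfolding norm_complex_def by (simp add: real_sqrt_mult)
  have "1 + Im z \<ge> 0"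
  proof (rule ccontr)
    assume "\<not> 1 + Im z \<ge> 0"
    then have "sqrt h * (- (1 + Im z)) < 1 * (- (1 + Im z))"
      using assms by (intro mult_strict_right_mono) auto
    moreover have "cmod z = sqrt h * (- (1 + Im z))"
      using norm \<open>\<not> 1 + Im z \<ge> 0\<close> by simp
    ultimately have "cmod z < - Im z"
      by (smt (verit))
    then show False
      using abs_Im_le_cmod[of z] by linarith
  qed
  then show "cmod z = sqrt h * (1 + Im z)"
    using norm by simp
next
  assume "cmod z = sqrt h * (1 + Im z)"
  then have "(Re z)^2 + (Im z)^2 = (sqrt h * (1 + Im z))^2"
    by (simp flip: cmod_power2)
  then show "z \<in> cpt ` C2 h"
    using assms(1) unfolding mem_cpt_image_iff C2_def by (simp add: power_mult_distrib)
qed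

lemma zero_notin_cpt_C2:
  assumes "0 < h" "h < 1"
  shows "0 \<notin> cpt ` C2 h"
  using cpt_C2_iff[OF assms, of 0] assms(1) by simp

lemma cpt_C2_eq_radial_image:
  assumes "0 < h" "h < 1"
  shows "cpt ` C2 h = (\<lambda>u. (sqrt h / (1 - sqrt h * Im u)) *\<^sub>R u) ` sphere 0 1"
proof (intro equalityI subsetI)
  fix z assume "z \<in> cpt ` C2 h"
  then have z: "cmod z = sqrt h * (1 + Im z)"
    using cpt_C2_iff[OF assms] by simp
  have "z \<noteq> 0"
    using zero_notin_cpt_C2[OF assms] \<open>z \<in> cpt ` C2 h\<close> by auto
  have "1 - sqrt h * Im (sgn z) = (cmod z - sqrt h * Im z) / cmod z"
    using \<open>z \<noteq> 0\<close> by (simp add: sgn_div_norm field_simps)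
  also have "\<dots> = sqrt h / cmod z"
    unfolding z by (simp add: algebra_simps)
  finally have "sqrt h / (1 - sqrt h * Im (sgn z)) = cmod z"
    using assms(1) \<open>z \<noteq> 0\<close> by simp
  then have "z = (sqrt h / (1 - sqrt h * Im (sgn z))) *\<^sub>R sgn z"
    using \<open>z \<noteq> 0\<close> by (simp add: sgn_div_norm)
  then show "z \<in> (\<lambda>u. (sqrt h / (1 - sqrt h * Im u)) *\<^sub>R u) ` sphere 0 1"
    using \<open>z \<noteq> 0\<close> by (intro image_eqI[where x = "sgn z"]) (simp_all add: norm_sgn)
next
  fix z assume "z \<in> (\<lambda>u. (sqrt h / (1 - sqrt h * Im u)) *\<^sub>R u) ` sphere 0 1"
  then obtain u where u: "u \<in> sphere 0 1" and z: "z = (sqrt h / (1 - sqrt h * Im u)) *\<^sub>R u"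
    by blast
  have "1 - sqrt h * Im u > 0"
    using radial_denominator_pos[OF _ _ u] assms by simp
  then have "cmod z = sqrt h * (1 + Im z)"
    using u assms(1) unfolding z by (simp add: field_simps)
  then show "z \<in> cpt ` C2 h"
    using cpt_C2_iff[OF assms] by simp
qed

lemma homeomorphism_sgn_radial_image:
  fixes \<rho> :: "'a::real_normed_vector \<Rightarrow> real"
  assumes "continuous_on (sphere 0 1) \<rho>" "\<And>u. u \<in> sphere 0 1 \<Longrightarrow> \<rho> u > 0"
  shows "homeomorphism ((\<lambda>u. \<rho> u *\<^sub>R u) ` sphere 0 1) (sphere 0 1) sgn (\<lambda>u. \<rho> u *\<^sub>R u)"
proof -
  have sgn_radial: "sgn (\<rho> u *\<^sub>R u) = u" if "u \<in> sphere 0 1" for u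
    using assms(2)[OF that] that by (simp add: sgn_scaleR sgn_div_norm)
  show ?thesis
  proof (rule homeomorphismI)
    show "continuous_on ((\<lambda>u. \<rho> u *\<^sub>R u) ` sphere 0 1) sgn"
      using assms(2) by (intro continuous_on_sgn continuous_on_id) force
    show "continuous_on (sphere 0 1) (\<lambda>u. \<rho> u *\<^sub>R u)"
      using assms(1) by (intro continuous_intros)
  qed (auto simp: sgn_radial)
qed

lemma homeomorphism_C2_sgn:
  assumes "0 < h" "h < 1"
  shows "homeomorphism (cpt ` C2 h) (sphere 0 1) sgn (\<lambda>u. (sqrt h / (1 - sqrt h * Im u)) *\<^sub>R u)"
  unfolding cpt_C2_eq_radial_image[OF assms]
proof (rule homeomorphism_sgn_radial_image)
  have "1 - sqrt h * Im u > 0" if "u \<in> sphere 0 1" for u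
    using radial_denominator_pos[OF _ _ that] assms by simp
  then show "continuous_on (sphere 0 1) (\<lambda>u. sqrt h / (1 - sqrt h * Im u))"
    by (intro continuous_on_divide continuous_intros) force
  show "sqrt h / (1 - sqrt h * Im u) > 0" if "u \<in> sphere 0 1" for u
    using \<open>\<And>u. u \<in> sphere 0 1 \<Longrightarrow> 1 - sqrt h * Im u > 0\<close>[OF that] assms by simp
qed

lemma zero_notin_closed_segment_sgn:
  fixes z :: "'a::real_normed_vector"
  assumes "z \<noteq> 0"
  shows "0 \<notin> closed_segment z (sgn z)"
proof
  assume "0 \<in> closed_segment z (sgn z)"
  then obtain u where u: "0 \<le> u" "u \<le> 1" "(1 - u) *\<^sub>R z + u *\<^sub>R sgn z = 0"
    unfolding in_segment by auto
  then have "((1 - u) + u / norm z) *\<^sub>R z = 0"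
    by (simp add: sgn_div_norm scaleR_add_left divide_inverse mult.commute)
  moreover have "(1 - u) + u / norm z > 0"
    using u assms by (cases "u = 1") (simp_all add: add_pos_nonneg)
  ultimately show False
    using assms by simp
qed

lemma winding_number_sgn_comp:
  fixes \<gamma> :: "real \<Rightarrow> complex"
  assumes "path \<gamma>" "pathfinish \<gamma> = pathstart \<gamma>" "0 \<notin> path_image \<gamma>"
  shows "winding_number (sgn \<circ> \<gamma>) 0 = winding_number \<gamma> 0"
proof (rule winding_number_loops_linear_eq)
  have "\<gamma> t \<noteq> 0" if "t \<in> {0..1}" for t
    using assms(3) that unfolding path_image_def by auto
  then show "path (sgn \<circ> \<gamma>)"
    using assms(1) unfolding path_def by (intro continuous_on_sgn continuous_on_compose) auto
  show "0 \<notin> closed_segment (\<gamma> t) ((sgn \<circ> \<gamma>) t)" if "t \<in> {0..1}" for t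
    using zero_notin_closed_segment_sgn \<open>\<And>t. t \<in> {0..1} \<Longrightarrow> \<gamma> t \<noteq> 0\<close> that
    unfolding o_def by blast
qed (use assms in \<open>auto simp: pathfinish_def pathstart_def\<close>)

lemma allI_positive_square:
  "(\<And>s. 0 < s \<Longrightarrow> P (s^2)) \<Longrightarrow> \<forall>h::real. 0 < h \<longrightarrow> P h"
  by (metis real_sqrt_gt_zero real_sqrt_pow2 less_imp_le)

theorem proposition16:
  fixes e :: real
  shows
    \<comment> \<open>(1) the map preserves the fibration by the conics C_{2,h}\<close>
    "(\<forall>h p. p \<in> C2 h \<and> Phi2_den e p \<noteq> 0 \<longrightarrow> Phi2 e p \<in> C2 h)
   \<and> (\<forall>h::real. h > 0 \<longrightarrow>
       \<comment> \<open>(2) P_{2,h} is a proper parametrization of C_{2,h} with inverse P2inv\<close>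
       finite {t. P2_den h t = 0 \<or> P2inv_den h (P2 h t) = 0}
     \<and> (\<forall>t. P2_den h t \<noteq> 0 \<longrightarrow> P2 h t \<in> C2 h)
     \<and> (\<forall>t. P2_den h t \<noteq> 0 \<and> P2inv_den h (P2 h t) \<noteq> 0 \<longrightarrow> P2inv h (P2 h t) = t)
     \<and> finite {p \<in> C2 h. P2inv_den h p = 0 \<or> P2_den h (P2inv h p) = 0}
     \<and> (\<forall>p \<in> C2 h. P2inv_den h p \<noteq> 0 \<and> P2_den h (P2inv h p) \<noteq> 0 \<longrightarrow> P2 h (P2inv h p) = p)
       \<comment> \<open>(3) conjugacy to the Moebius map: M_{2,h} = P^{-1} o Phi o P\<close>
     \<and> finite {t. P2_den h t = 0 \<or> Phi2_den e (P2 h t) = 0 \<or> P2inv_den h (Phi2 e (P2 h t)) = 0}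
     \<and> (\<forall>t. P2_den h t \<noteq> 0 \<and> Phi2_den e (P2 h t) \<noteq> 0 \<and> P2inv_den h (Phi2 e (P2 h t)) \<noteq> 0
            \<longrightarrow> P2inv h (Phi2 e (P2 h t)) = M2 e h t))
   \<and> (\<forall>h::real. 0 < h \<and> h < 1 \<longrightarrow>
       \<comment> \<open>(4) on each closed curve the map is (orientation-preservingly) conjugate
            to the rotation with rotation number rho2 e\<close>
       (\<forall>p \<in> C2 h. Phi2_den e p \<noteq> 0)
     \<and> (\<exists>\<psi> \<psi>'. homeomorphism (cpt ` C2 h) (sphere (0::complex) 1) \<psi> \<psi>'
          \<and> (\<forall>p \<in> C2 h. \<psi> (cpt (Phi2 e p)) = exp (2 * pi * \<i> * complex_of_real (rho2 e)) * \<psi> (cpt p))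
          \<and> (\<forall>\<gamma>. path \<gamma> \<and> pathfinish \<gamma> = pathstart \<gamma> \<and> path_image \<gamma> \<subseteq> cpt ` C2 h
                \<longrightarrow> winding_number (\<psi> \<circ> \<gamma>) 0 = winding_number \<gamma> 0)))"
proof -
  have rotation: "\<exists>\<psi> \<psi>'. homeomorphism (cpt ` C2 h) (sphere 0 1) \<psi> \<psi>'
      \<and> (\<forall>p \<in> C2 h. \<psi> (cpt (Phi2 e p)) = exp (2 * pi * \<i> * complex_of_real (rho2 e)) * \<psi> (cpt p))
      \<and> (\<forall>\<gamma>. path \<gamma> \<and> pathfinish \<gamma> = pathstart \<gamma> \<and> path_image \<gamma> \<subseteq> cpt ` C2 h
            \<longrightarrow> winding_number (\<psi> \<circ> \<gamma>) 0 = winding_number \<gamma> 0)"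
    if "0 < h" "h < 1" for h
    using homeomorphism_C2_sgn[OF that] sgn_cpt_Phi2[OF that] zero_notin_cpt_C2[OF that]
      winding_number_sgn_comp by blast
  have "Phi2_den e p \<noteq> 0" if "0 < h" "h < 1" "p \<in> C2 h" for h p
    using Phi2_den_neg_on_C2[OF that] by (rule less_imp_neq)
  with rotation show ?thesis
    by (intro conjI allI_positive_square allI impI ballI)
      (blast intro: Phi2_in_C2 finite_P2_exceptional P2_in_C2 P2inv_P2 finite_P2inv_exceptional
         P2_P2inv finite_P2_Phi2_exceptional P2inv_Phi2_P2_eq_M2 less_imp_le)+
qed

end
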